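(* Let $p\in\mathbb N$, let $H_1,\ldots,H_p$ be separable Hilbert spaces, let $I_i:H_{p+2-i}\to H_{p+1-i}$ ($i=2,\ldots,p$) be linear operators, and let $B_1,\ldots,B_p$ be linear (possibly unbounded) operators on $H_1$ with $Dom(B):=Dom(B_1)\cap\cdots\cap Dom(B_p)$ non-empty. Let $L$ be a zero-mean square-integrable $H_p$-valued Lévy process, $\delta>0$, $t_i=i\delta$, and assume the increments of $L$ lie in the domain of $I_p\cdots I_2$; set $\epsilon_i:=\delta^{-1}I_p\cdots I_2(L(t_{i+1})-L(t_i))$, $i=0,1,2,\ldots$. Let $\{x_i\}_{i\ge0}\subset H_1$ be defined by $$Q_p\!\left(\frac{\Delta_\delta}{\delta}\right)x_i=\epsilon_i,\qquad i=0,1,2,\ldots,$$ with given initial values $x_0,\ldots,x_{p-1}$, where $Q_p(\lambda)=\lambda^p-B_1\lambda^{p-1}-\cdots-B_{p-1}\lambda-B_p$, i.e. $\delta^{-p}\Delta_\delta^p x_i-\sum_{q=1}^p\delta^{-(p-q)}B_q\Delta_\delta^{p-q}x_i=\epsilon_i$. Assume that $B_1y_1+\cdots+B_py_p\in Dom(B)$ for all $y_1,\ldots,y_p\in Dom(B)$, that $\epsilon_i\in Dom(B)$ for all $i$, and that $x_0,\ldots,x_{p-1}\in Dom(B)$. Then $\{x_i\}_{i\ge0}$ is an AR$(p)$ process in $H_1$ with dynamics $$x_{i+p}=\sum_{q=1}^p\widetilde B_qx_{i+(p-q)}+\delta^p\epsilon_i,$$ where $$\widetilde B_q=(-1)^{q+1}\binom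 pq\mathrm{Id}+\sum_{k=1}^q\delta^kB_k(-1)^{q-k}\binom{p-k}{q-k},\qquad q=1,\ldots,p,$$ and $\mathrm{Id}$ is the identity on $H_1$.
   Context: $\Delta_\delta^n$ is the $n$th order forward difference acting on the sequence via $x_i=x(t_i)$: $\Delta_\delta^nx_i=\sum_{k=0}^n\binom nk(-1)^kx_{i+n-k}$, with $\Delta_\delta^0$ the identity. In the paper the operators $B_q$ arise from operators $A_q:H_{p+1-q}\to H_p$ of an operator matrix via $I_p\cdots I_2A_q=B_qI_pI_{p-1}\cdots I_{q+1}$ for $q=1,\ldots,p-1$ and $B_p:=I_p\cdots I_2A_p$, but only the operators $B_1,\ldots,B_p$ on $H_1$ enter the statement. *)

theory Defs
  imports "HOL-Analysis.Analysis"
begin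

text \<open>A (possibly unbounded) linear operator T with domain D: D is a linear
  subspace and T is additive and homogeneous on D (values of T outside D are
  irrelevant).\<close>
definition linear_on_domain :: "'a::real_vector set \<Rightarrow> ('a \<Rightarrow> 'a) \<Rightarrow> bool" where
  "linear_on_domain D T \<longleftrightarrow> subspace D \<and>
     (\<forall>x\<in>D. \<forall>y\<in>D. T (x + y) = T x + T y) \<and>
     (\<forall>c. \<forall>x\<in>D. T (c *\<^sub>R x) = c *\<^sub>R T x)"

definition fdiff :: "nat \<Rightarrow> (nat \<Rightarrow> 'a::real_vector) \<Rightarrow> nat \<Rightarrow> 'a" where
  "fdiff n x i = (\<Sum>k=0..n. (real (n choose k) * (-1) ^ k) *\<^sub>R x (i + n - k))"

definition AR_coeff :: "nat \<Rightarrow> real \<Rightarrow> (nat \<Rightarrow> 'a \<Rightarrow> 'a::real_vector) \<Rightarrow> nat \<Rightarrow> 'a \<Rightarrow> 'a" where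
  "AR_coeff p \<delta> B q y =
     ((-1) ^ (q + 1) * real (p choose q)) *\<^sub>R y
     + (\<Sum>k=1..q. (\<delta> ^ k * (-1) ^ (q - k) * real ((p - k) choose (q - k))) *\<^sub>R B k y)"

end

theory Submission
  imports Defs
begin

text \<open>Multiplying the recursion by \<open>\<delta>^p\<close> and splitting off the leading term of \<open>fdiff p x i\<close>
  expresses \<open>x (i + p)\<close> through earlier iterates, the terms \<open>\<delta>^q B q (fdiff (p - q) x i)\<close> and
  \<open>\<delta>^p \<epsilon> i\<close>. As \<open>Dom(B)\<close> is stable under this expression, strong induction keeps every iterate
  in \<open>Dom(B)\<close>, so the possibly unbounded operators \<open>B q\<close> can be pushed through the finite
  differences; collecting the resulting double sum by the index of \<open>x\<close> gives the coefficients
  \<open>AR_coeff\<close>.\<close>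

lemma linear_on_domain_zero: "linear_on_domain D T \<Longrightarrow> T 0 = 0"
  unfolding linear_on_domain_def by (metis scale_zero_left subspace_0)

lemma linear_on_domain_sum:
  assumes T: "linear_on_domain D T" and "finite S" and "\<And>s. s \<in> S \<Longrightarrow> f s \<in> D"
  shows "T (\<Sum>s\<in>S. c s *\<^sub>R f s) = (\<Sum>s\<in>S. c s *\<^sub>R T (f s))"
  using assms(2,3)
proof (induction S rule: finite_induct)
  case empty
  then show ?case using linear_on_domain_zero[OF T] by simp
next
  case (insert a S)
  have D: "subspace D" using T unfolding linear_on_domain_def by blast
  have "(\<Sum>s\<in>S. c s *\<^sub>R f s) \<in> D" "c a *\<^sub>R f a \<in> D"
    using insert by (auto intro!: subspace_sum[OF D] subspace_scale[OF D])
  then show ?case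
    using T insert unfolding linear_on_domain_def by simp
qed

lemma fdiff_in_subspace:
  assumes "subspace S" and "\<And>j. j \<le> i + n \<Longrightarrow> x j \<in> S"
  shows "fdiff n x i \<in> S"
  unfolding fdiff_def using assms
  by (intro subspace_sum subspace_scale) auto

lemma linear_on_domain_fdiff:
  assumes "linear_on_domain D T" and "\<And>j. j \<le> i + n \<Longrightarrow> x j \<in> D"
  shows "T (fdiff n x i) = fdiff n (\<lambda>j. T (x j)) i"
  unfolding fdiff_def using assms by (intro linear_on_domain_sum) auto

lemma fdiff_eq_lead_plus_sum:
  "fdiff n x i = x (i + n) + (\<Sum>k=1..n. (real (n choose k) * (-1) ^ k) *\<^sub>R x (i + (n - k)))"
proof -
  have "fdiff n x i = (\<Sum>k\<in>insert 0 {1..n}. (real (n choose k) * (-1) ^ k) *\<^sub>R x (i + n - k))"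
    unfolding fdiff_def by (rule sum.cong) auto
  then show ?thesis by simp
qed

lemma fdiff_reindex_atLeastAtMost:
  assumes "q \<le> p"
  shows "fdiff (p - q) x i = (\<Sum>m=q..p. (real ((p - q) choose (m - q)) * (-1) ^ (m - q)) *\<^sub>R x (i + (p - m)))"
proof -
  have "fdiff (p - q) x i = (\<Sum>m=0+q..(p-q)+q. (real ((p - q) choose (m - q)) * (-1) ^ (m - q)) *\<^sub>R x (i + (p - m)))"
    unfolding fdiff_def sum.shift_bounds_cl_nat_ivl using assms
    by (intro sum.cong) (auto simp: add.commute)
  then show ?thesis using assms by simp
qed

lemma sum_atLeastAtMost_triangle_swap:
  fixes a p :: nat
  shows "(\<Sum>q=a..p. \<Sum>m=q..p. g q m) = (\<Sum>m=a..p. \<Sum>q=a..m. g q m)"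
proof -
  have "(\<Sum>q=a..p. \<Sum>m=q..p. g q m) = (\<Sum>q=a..p. \<Sum>m\<in>{m. m \<in> {a..p} \<and> q \<le> m}. g q m)"
    by (intro sum.cong) auto
  also have "\<dots> = (\<Sum>m=a..p. \<Sum>q\<in>{q. q \<in> {a..p} \<and> q \<le> m}. g q m)"
    by (rule sum.swap_restrict) auto
  also have "\<dots> = (\<Sum>m=a..p. \<Sum>q=a..m. g q m)"
    by (intro sum.cong) auto
  finally show ?thesis .
qed

lemma recursion_solved:
  fixes B :: "nat \<Rightarrow> 'a::real_vector \<Rightarrow> 'a"
  assumes \<delta>: "\<delta> \<noteq> 0"
    and recursion: "(1 / \<delta> ^ p) *\<^sub>R fdiff p x i
        - (\<Sum>q=1..p. (1 / \<delta> ^ (p - q)) *\<^sub>R B q (fdiff (p - q) x i)) = e"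
  shows "x (i + p) = (\<Sum>q=1..p. ((-1) ^ (q + 1) * real (p choose q)) *\<^sub>R x (i + (p - q)))
      + (\<Sum>q=1..p. \<delta> ^ q *\<^sub>R B q (fdiff (p - q) x i)) + \<delta> ^ p *\<^sub>R e"
proof -
  have "\<delta> ^ p * (1 / \<delta> ^ (p - q)) = \<delta> ^ q" if "q \<in> {1..p}" for q
    using that \<delta> by (simp add: power_diff)
  then have "fdiff p x i - (\<Sum>q=1..p. \<delta> ^ q *\<^sub>R B q (fdiff (p - q) x i)) = \<delta> ^ p *\<^sub>R e"
    using arg_cong[OF recursion, of "scaleR (\<delta> ^ p)"] \<delta>
    by (simp add: scaleR_diff_right scaleR_sum_right)
  moreover have "(\<Sum>q=1..p. ((-1) ^ (q + 1) * real (p choose q)) *\<^sub>R x (i + (p - q)))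
      = - (\<Sum>q=1..p. (real (p choose q) * (-1) ^ q) *\<^sub>R x (i + (p - q)))"
    by (simp add: sum_negf[symmetric] mult.commute)
  ultimately show ?thesis
    unfolding fdiff_eq_lead_plus_sum by (simp add: algebra_simps)
qed

lemma recursion_iterates_in_subspace:
  fixes B :: "nat \<Rightarrow> 'a::real_vector \<Rightarrow> 'a"
  assumes \<delta>: "\<delta> \<noteq> 0" and D: "subspace D"
    and B_lin: "\<And>q. q \<in> {1..p} \<Longrightarrow> linear_on_domain (Dom q) (B q)"
    and D_sub: "\<And>q. q \<in> {1..p} \<Longrightarrow> D \<subseteq> Dom q"
    and closed: "\<And>y. (\<And>q. q \<in> {1..p} \<Longrightarrow> y q \<in> D) \<Longrightarrow> (\<Sum>q=1..p. B q (y q)) \<in> D"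
    and recursion: "\<And>i. (1 / \<delta> ^ p) *\<^sub>R fdiff p x i
        - (\<Sum>q=1..p. (1 / \<delta> ^ (p - q)) *\<^sub>R B q (fdiff (p - q) x i)) = e i"
    and e_D: "\<And>i. e i \<in> D"
    and init_D: "\<And>i. i < p \<Longrightarrow> x i \<in> D"
  shows "x j \<in> D"
proof (induction j rule: less_induct)
  case (less j)
  show ?case
  proof (cases "j < p")
    case True
    then show ?thesis by (rule init_D)
  next
    case False
    then obtain i where j: "j = i + p" by (metis add.commute le_Suc_ex not_less)
    have fdiff_D: "fdiff (p - q) x i \<in> D" if "q \<in> {1..p}" for q
      using that j by (intro fdiff_in_subspace[OF D] less.IH) auto
    have "\<delta> ^ q *\<^sub>R B q (fdiff (p - q) x i) = B q (\<delta> ^ q *\<^sub>R fdiff (p - q) x i)" if "q \<in> {1..p}" for q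
      using B_lin[OF that] D_sub[OF that] fdiff_D[OF that] unfolding linear_on_domain_def by auto
    then have "(\<Sum>q=1..p. \<delta> ^ q *\<^sub>R B q (fdiff (p - q) x i)) \<in> D"
      using closed[of "\<lambda>q. \<delta> ^ q *\<^sub>R fdiff (p - q) x i"] fdiff_D subspace_scale[OF D] by simp
    moreover have "(\<Sum>q=1..p. ((-1) ^ (q + 1) * real (p choose q)) *\<^sub>R x (i + (p - q))) \<in> D"
      using j by (intro subspace_sum[OF D] subspace_scale[OF D] less.IH) auto
    ultimately show ?thesis
      unfolding j recursion_solved[where B = B, OF \<delta> recursion[of i]]
      by (intro subspace_add[OF D] subspace_scale[OF D] e_D)
  qed
qed

lemma sum_AR_coeff_eq:
  assumes B_lin: "\<And>q. q \<in> {1..p} \<Longrightarrow> linear_on_domain (Dom q) (B q)"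
    and x_Dom: "\<And>q j. q \<in> {1..p} \<Longrightarrow> x j \<in> Dom q"
  shows "(\<Sum>q=1..p. AR_coeff p \<delta> B q (x (i + (p - q))))
      = (\<Sum>q=1..p. ((-1) ^ (q + 1) * real (p choose q)) *\<^sub>R x (i + (p - q)))
        + (\<Sum>q=1..p. \<delta> ^ q *\<^sub>R B q (fdiff (p - q) x i))"
proof -
  define F where "F q m = (\<delta> ^ q * (-1) ^ (m - q) * real ((p - q) choose (m - q))) *\<^sub>R B q (x (i + (p - m)))"
    for q m
  have "\<delta> ^ q *\<^sub>R B q (fdiff (p - q) x i) = (\<Sum>m=q..p. F q m)" if q: "q \<in> {1..p}" for q
    using q unfolding linear_on_domain_fdiff[OF B_lin[OF q] x_Dom[OF q]]
    by (simp add: fdiff_reindex_atLeastAtMost scaleR_sum_right F_def mult_ac)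
  then have "(\<Sum>q=1..p. \<delta> ^ q *\<^sub>R B q (fdiff (p - q) x i)) = (\<Sum>m=1..p. \<Sum>q=1..m. F q m)"
    by (simp flip: sum_atLeastAtMost_triangle_swap)
  then show ?thesis
    unfolding AR_coeff_def F_def sum.distrib by simp
qed

theorem proposition6:
  fixes p :: nat
    and \<delta> :: real
    and B :: "nat \<Rightarrow> 'a::{real_inner, complete_space} \<Rightarrow> 'a"
    and Dom :: "nat \<Rightarrow> 'a set"
    and \<epsilon> :: "nat \<Rightarrow> 'a"
    and x :: "nat \<Rightarrow> 'a"
  assumes separable: "\<exists>S::'a set. countable S \<and> closure S = UNIV"
    and B_lin: "\<And>q. q \<in> {1..p} \<Longrightarrow> linear_on_domain (Dom q) (B q)"
    and DomB_ne: "(\<Inter>q\<in>{1..p}. Dom q) \<noteq> {}"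
    and delta_pos: "\<delta> > 0"
    and recursion: "\<And>i. (1 / \<delta> ^ p) *\<^sub>R fdiff p x i
        - (\<Sum>q=1..p. (1 / \<delta> ^ (p - q)) *\<^sub>R B q (fdiff (p - q) x i)) = \<epsilon> i"
    and closed: "\<And>y. (\<And>q. q \<in> {1..p} \<Longrightarrow> y q \<in> (\<Inter>q\<in>{1..p}. Dom q)) \<Longrightarrow>
        (\<Sum>q=1..p. B q (y q)) \<in> (\<Inter>q\<in>{1..p}. Dom q)"
    and eps_dom: "\<And>i. \<epsilon> i \<in> (\<Inter>q\<in>{1..p}. Dom q)"
    and init_dom: "\<And>i. i < p \<Longrightarrow> x i \<in> (\<Inter>q\<in>{1..p}. Dom q)"
  shows "\<forall>i. x (i + p) = (\<Sum>q=1..p. AR_coeff p \<delta> B q (x (i + (p - q)))) + \<delta> ^ p *\<^sub>R \<epsilon> i"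
proof
  fix i
  have "\<delta> \<noteq> 0" using delta_pos by simp
  have "subspace (\<Inter>q\<in>{1..p}. Dom q)"
    using B_lin unfolding linear_on_domain_def by (intro subspace_Inter) auto
  then have "x j \<in> (\<Inter>q\<in>{1..p}. Dom q)" for j
    by (rule recursion_iterates_in_subspace[OF \<open>\<delta> \<noteq> 0\<close> _ B_lin _ closed recursion eps_dom init_dom])
      auto
  then have x_Dom: "x j \<in> Dom q" if "q \<in> {1..p}" for q j
    using that by blast
  show "x (i + p) = (\<Sum>q=1..p. AR_coeff p \<delta> B q (x (i + (p - q)))) + \<delta> ^ p *\<^sub>R \<epsilon> i"
    using recursion_solved[where B = B, OF \<open>\<delta> \<noteq> 0\<close> recursion[of i]]
      sum_AR_coeff_eq[of p Dom B x \<delta> i, OF B_lin x_Dom] by simp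
qed

end
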